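(* Let $n_0,\dots,n_g\ge1$ and let $K\subseteq\mathbb Z^{g+1}$ be the subgroup generated by $(1,1,\dots,1)$ and the vectors $n_0e_0-n_\alpha e_\alpha$ for $\alpha=1,\dots,g$ (where $e_\alpha$ is the $\alpha$-th standard basis vector, indices from $0$). Then there is a group isomorphism $\mathbb Z^{g+1}/K\cong\mathrm{Jac}(B_{n_0,\dots,n_g})$ sending the coset of $(a_0,\dots,a_g)$ to the class of $\sum_{\alpha=0}^g a_\alpha(v_{\alpha,1}-v_{0,0})$; in particular, when $0\le a_\alpha\le n_\alpha$ for all $\alpha$, the coset of $(a_0,\dots,a_g)$ corresponds to the class of $\sum_{\alpha=0}^g(v_{\alpha,a_\alpha}-v_{0,0})$.
   Context: A graph is a finite, connected, loopless multigraph (parallel edges allowed). A divisor is an element of the free abelian group on $V(G)$; linear equivalence is generated by chip-firing (firing $w$ subtracts $\mathrm{val}(w)$ chips from $w$ and adds to each other vertex the number of edges joining it to $w$). $\mathrm{Jac}(G)$ is the group of linear equivalence classes of degree-$0$ divisors. For positive integers $n_0,\dots,n_g$, the banana graph $B_{n_0,\dots,n_g}$ is obtained by joining two vertices by $g+1$ internally disjoint paths of lengths $n_0,\dots,n_g$; it has genus $g$. Its vertices are labelled $v_{\alpha,i}$ ($0\le\alpha\le g$, $0\le i\le n_\alpha$), with $v_{\alpha,i}$ the vertex at distance $i$ from $v_{0,0}$ along the $\alpha$-th path; $v_{\alpha,0}=v_{0,0}$ and $v_{\alpha,n_\alpha}=v_{0,n_0}$ for all $\alpha$, other labels unique. *)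

theory Defs
  imports "HOL-Algebra.Algebra"
begin

text \<open>Vertices are encoded as pairs (alpha, i) of naturals. The canonical label of
  v_{alpha,i}: v_{alpha,0} = v_{0,0} and v_{alpha,n_alpha} = v_{0,n_0}.\<close>
definition bvert :: "(nat \<Rightarrow> nat) \<Rightarrow> nat \<Rightarrow> nat \<Rightarrow> nat \<times> nat" where
  "bvert n \<alpha> i = (if i = 0 then (0, 0) else if i = n \<alpha> then (0, n 0) else (\<alpha>, i))"

definition bverts :: "nat \<Rightarrow> (nat \<Rightarrow> nat) \<Rightarrow> (nat \<times> nat) set" where
  "bverts g n = {bvert n \<alpha> i | \<alpha> i. \<alpha> \<le> g \<and> i \<le> n \<alpha>}"

text \<open>Edges: for each path alpha and each 0 <= i < n_alpha there is one edge
  joining v_{alpha,i} and v_{alpha,i+1}. bmult u w = number of edges joining u and w.\<close>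
definition bedges :: "nat \<Rightarrow> (nat \<Rightarrow> nat) \<Rightarrow> (nat \<times> nat) set" where
  "bedges g n = {(\<alpha>, i). \<alpha> \<le> g \<and> i < n \<alpha>}"

definition bmult :: "nat \<Rightarrow> (nat \<Rightarrow> nat) \<Rightarrow> nat \<times> nat \<Rightarrow> nat \<times> nat \<Rightarrow> nat" where
  "bmult g n u w = card {e \<in> bedges g n.
      (bvert n (fst e) (snd e), bvert n (fst e) (Suc (snd e))) = (u, w) \<or>
      (bvert n (fst e) (snd e), bvert n (fst e) (Suc (snd e))) = (w, u)}"

definition bval :: "nat \<Rightarrow> (nat \<Rightarrow> nat) \<Rightarrow> nat \<times> nat \<Rightarrow> nat" where
  "bval g n w = (\<Sum>u \<in> bverts g n - {w}. bmult g n u w)"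

definition fire_delta :: "nat \<Rightarrow> (nat \<Rightarrow> nat) \<Rightarrow> nat \<times> nat \<Rightarrow> nat \<times> nat \<Rightarrow> int" where
  "fire_delta g n w u = (if u = w then - int (bval g n w) else int (bmult g n u w))"

definition indic :: "'a \<Rightarrow> 'a \<Rightarrow> int" where
  "indic v u = (if u = v then 1 else 0)"

definition Div0 :: "nat \<Rightarrow> (nat \<Rightarrow> nat) \<Rightarrow> ((nat \<times> nat) \<Rightarrow> int) monoid" where
  "Div0 g n = \<lparr> carrier = {D. (\<forall>u. u \<notin> bverts g n \<longrightarrow> D u = 0) \<and> (\<Sum>u \<in> bverts g n. D u) = 0},
               monoid.mult = (\<lambda>D E u. D u + E u), one = (\<lambda>u. 0) \<rparr>"

text \<open>Principal divisors: integer combinations of firing moves (linear equivalence is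
  generated by chip-firing).\<close>
definition Prin :: "nat \<Rightarrow> (nat \<Rightarrow> nat) \<Rightarrow> ((nat \<times> nat) \<Rightarrow> int) set" where
  "Prin g n = {(\<lambda>u. \<Sum>w \<in> bverts g n. c w * fire_delta g n w u) | c. True}"

definition Jac :: "nat \<Rightarrow> (nat \<Rightarrow> nat) \<Rightarrow> ((nat \<times> nat) \<Rightarrow> int) set monoid" where
  "Jac g n = Div0 g n Mod Prin g n"

definition Zg :: "nat \<Rightarrow> (nat \<Rightarrow> int) monoid" where
  "Zg g = \<lparr> carrier = {a. \<forall>i. g < i \<longrightarrow> a i = 0},
            monoid.mult = (\<lambda>a b i. a i + b i), one = (\<lambda>i. 0) \<rparr>"

definition Kgen :: "nat \<Rightarrow> (nat \<Rightarrow> nat) \<Rightarrow> (nat \<Rightarrow> int) set" where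
  "Kgen g n = {(\<lambda>i. if i \<le> g then 1 else 0)} \<union>
     {(\<lambda>i. int (n 0) * indic 0 i - int (n \<alpha>) * indic \<alpha> i) | \<alpha>. 1 \<le> \<alpha> \<and> \<alpha> \<le> g}"

definition Ksub :: "nat \<Rightarrow> (nat \<Rightarrow> nat) \<Rightarrow> (nat \<Rightarrow> int) set" where
  "Ksub g n = generate (Zg g) (Kgen g n)"

end

theory Submission
  imports Defs
begin

text \<open>Firing a script \<open>c\<close> adds to a divisor, for every edge \<open>s \<longrightarrow> t\<close>, the term
  \<open>(c t - c s)(s - t)\<close>. The interior vertices of each path have degree two, so
  \<open>v\<^sub>\<alpha>\<^sub>,\<^sub>i - v\<^sub>0\<^sub>,\<^sub>0\<close> is equivalent to \<open>i (v\<^sub>\<alpha>\<^sub>,\<^sub>1 - v\<^sub>0\<^sub>,\<^sub>0)\<close>; hence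
  \<open>a \<mapsto> \<Sum>\<^sub>\<alpha> a\<^sub>\<alpha> (v\<^sub>\<alpha>\<^sub>,\<^sub>1 - v\<^sub>0\<^sub>,\<^sub>0)\<close> is onto the Jacobian and kills \<open>K\<close>.
  Conversely, if this divisor is the one obtained by firing \<open>c\<close>, then \<open>c\<close> has vanishing second
  differences in the interior of each path except for a jump \<open>a\<^sub>\<alpha>\<close> at \<open>v\<^sub>\<alpha>\<^sub>,\<^sub>1\<close>, so \<open>c\<close> is
  affine along path \<open>\<alpha>\<close> with some slope \<open>d\<^sub>\<alpha>\<close>. Comparing the two ends of the paths gives
  \<open>a\<^sub>\<alpha> = n\<^sub>\<alpha> d\<^sub>\<alpha> - T\<close> with \<open>T = c v\<^sub>0\<^sub>,\<^sub>n\<^sub>0 - c v\<^sub>0\<^sub>,\<^sub>0\<close>, and the value at \<open>v\<^sub>0\<^sub>,\<^sub>0\<close> gives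
  \<open>\<Sum>\<^sub>\<alpha> d\<^sub>\<alpha> = 0\<close>; this writes \<open>a\<close> in terms of the generators of \<open>K\<close>.\<close>

definition edge_src :: "(nat \<Rightarrow> nat) \<Rightarrow> nat \<times> nat \<Rightarrow> nat \<times> nat" where
  "edge_src n e = bvert n (fst e) (snd e)"

definition edge_tgt :: "(nat \<Rightarrow> nat) \<Rightarrow> nat \<times> nat \<Rightarrow> nat \<times> nat" where
  "edge_tgt n e = bvert n (fst e) (Suc (snd e))"

lemma bedges_eq_Sigma: "bedges g n = (SIGMA \<alpha>:{..g}. {..<n \<alpha>})"
  by (auto simp: bedges_def)

lemma finite_bedges [simp]: "finite (bedges g n)"
  by (simp add: bedges_eq_Sigma)

lemma finite_bverts [simp]: "finite (bverts g n)"
proof -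
  have "bverts g n = (\<lambda>(\<alpha>, i). bvert n \<alpha> i) ` (SIGMA \<alpha>:{..g}. {..n \<alpha>})"
    by (auto simp: bverts_def)
  then show ?thesis by simp
qed

lemma bvert_in_bverts: "\<alpha> \<le> g \<Longrightarrow> i \<le> n \<alpha> \<Longrightarrow> bvert n \<alpha> i \<in> bverts g n"
  by (auto simp: bverts_def)

lemma origin_in_bverts: "(0, 0) \<in> bverts g n"
  using bvert_in_bverts[of 0 g 0 n] by (simp add: bvert_def)

lemma edge_src_in_bverts: "e \<in> bedges g n \<Longrightarrow> edge_src n e \<in> bverts g n"
  by (auto simp: edge_src_def bedges_def intro!: bvert_in_bverts)

lemma edge_tgt_in_bverts: "e \<in> bedges g n \<Longrightarrow> edge_tgt n e \<in> bverts g n"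
  by (auto simp: edge_tgt_def bedges_def intro!: bvert_in_bverts)

lemma bverts_canonical:
  assumes "u \<in> bverts g n"
  shows "fst u \<le> g \<and> snd u \<le> n (fst u) \<and> bvert n (fst u) (snd u) = u"
  using assms unfolding bverts_def by (auto simp: bvert_def split: if_splits)

lemma sum_indic: "finite V \<Longrightarrow> x \<in> V \<Longrightarrow> (\<Sum>u\<in>V. indic x u) = (1::int)"
  by (simp add: indic_def)

lemma sum_mult_indic: "finite V \<Longrightarrow> x \<in> V \<Longrightarrow> (\<Sum>w\<in>V. c w * indic w x) = (c x :: int)"
  by (simp add: indic_def if_distrib cong: if_cong)

lemma indic_commute: "indic x y = indic y x"
  by (auto simp: indic_def)

locale banana_graph =
  fixes g :: nat and n :: "nat \<Rightarrow> nat"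
  assumes paths_nonempty: "\<forall>\<alpha>\<le>g. 1 \<le> n \<alpha>"
begin

lemma edge_src_neq_tgt: "e \<in> bedges g n \<Longrightarrow> edge_src n e \<noteq> edge_tgt n e"
  using paths_nonempty by (cases e) (auto simp: edge_src_def edge_tgt_def bvert_def bedges_def)

lemma bvert_end: "\<alpha> \<le> g \<Longrightarrow> bvert n \<alpha> (n \<alpha>) = (0, n 0)"
  using paths_nonempty by (auto simp: bvert_def)

lemma indic_edge_src_origin:
  "e \<in> bedges g n \<Longrightarrow> indic (edge_src n e) (0, 0) = (if snd e = 0 then 1 else 0)"
  using paths_nonempty by (cases e) (auto simp: indic_def edge_src_def bvert_def bedges_def)

lemma indic_edge_tgt_origin: "e \<in> bedges g n \<Longrightarrow> indic (edge_tgt n e) (0, 0) = 0"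
  using paths_nonempty by (cases e) (auto simp: indic_def edge_tgt_def bvert_def bedges_def)

lemma indic_edge_src_interior:
  "e \<in> bedges g n \<Longrightarrow> 0 < j \<Longrightarrow> j < n \<alpha> \<Longrightarrow>
    indic (edge_src n e) (\<alpha>, j) = (if e = (\<alpha>, j) then 1 else 0)"
  by (cases e) (auto simp: indic_def edge_src_def bvert_def bedges_def)

lemma indic_edge_tgt_interior:
  "e \<in> bedges g n \<Longrightarrow> 0 < j \<Longrightarrow> j < n \<alpha> \<Longrightarrow>
    indic (edge_tgt n e) (\<alpha>, j) = (if e = (\<alpha>, j - 1) then 1 else 0)"
  using paths_nonempty by (cases e) (auto simp: indic_def edge_tgt_def bvert_def bedges_def)

lemma sum_bedges_initial:
  "(\<Sum>e\<in>bedges g n. if snd e = 0 then F e else (0::int)) = (\<Sum>\<beta>\<le>g. F (\<beta>, 0))"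
proof -
  have "(\<Sum>e\<in>bedges g n. if snd e = 0 then F e else (0::int)) =
      (\<Sum>\<beta>\<le>g. \<Sum>k<n \<beta>. if k = 0 then F (\<beta>, k) else 0)"
    unfolding bedges_eq_Sigma by (subst sum.Sigma) (auto simp: split_beta intro!: sum.cong)
  also have "\<dots> = (\<Sum>\<beta>\<le>g. F (\<beta>, 0))"
    using paths_nonempty by (intro sum.cong) auto
  finally show ?thesis .
qed

end

section \<open>Principal divisors as images of firing scripts\<close>

definition firing_div :: "nat \<Rightarrow> (nat \<Rightarrow> nat) \<Rightarrow> (nat \<times> nat \<Rightarrow> int) \<Rightarrow> nat \<times> nat \<Rightarrow> int" where
  "firing_div g n c = (\<lambda>u. \<Sum>e\<in>bedges g n.
     (c (edge_tgt n e) - c (edge_src n e)) * (indic (edge_src n e) u - indic (edge_tgt n e) u))"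

lemma sum_firing_div: "(\<Sum>u\<in>bverts g n. firing_div g n c u) = 0"
proof -
  have "(\<Sum>u\<in>bverts g n. firing_div g n c u) = (\<Sum>e\<in>bedges g n. (c (edge_tgt n e) - c (edge_src n e)) *
          (\<Sum>u\<in>bverts g n. indic (edge_src n e) u - indic (edge_tgt n e) u))"
    unfolding firing_div_def by (subst sum.swap) (simp add: sum_distrib_left)
  also have "\<dots> = 0"
    by (rule sum.neutral) (simp add: sum_subtractf sum_indic edge_src_in_bverts edge_tgt_in_bverts)
  finally show ?thesis .
qed

lemma (in banana_graph) fire_delta_eq_firing_div:
  assumes w: "w \<in> bverts g n"
  shows "fire_delta g n w = firing_div g n (indic w)"
proof
  fix u
  let ?R = "firing_div g n (indic w)"
  have off_diagonal: "int (bmult g n u w) = ?R u" if uw: "u \<noteq> w" for u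
  proof -
    let ?P = "\<lambda>e. (edge_src n e, edge_tgt n e) = (u, w) \<or> (edge_src n e, edge_tgt n e) = (w, u)"
    have "?R u = (\<Sum>e\<in>bedges g n. if ?P e then 1 else 0)"
      unfolding firing_div_def
    proof (rule sum.cong[OF refl])
      fix e assume "e \<in> bedges g n"
      then have "edge_src n e \<noteq> edge_tgt n e" by (rule edge_src_neq_tgt)
      then show "(indic w (edge_tgt n e) - indic w (edge_src n e)) *
          (indic (edge_src n e) u - indic (edge_tgt n e) u) = (if ?P e then 1 else 0)"
        using uw by (auto simp: indic_def)
    qed
    also have "\<dots> = int (card {e\<in>bedges g n. ?P e})"
      by (simp add: sum.If_cases Int_def conj_commute)
    finally show ?thesis by (simp add: bmult_def edge_src_def edge_tgt_def)
  qed
  show "fire_delta g n w u = ?R u"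
  proof (cases "u = w")
    case True
    have "fire_delta g n w w = - (\<Sum>u\<in>bverts g n - {w}. ?R u)"
      by (simp add: fire_delta_def bval_def off_diagonal)
    also have "\<dots> = ?R w"
      using sum_firing_div[of g n "indic w"] w by (simp add: sum.remove)
    finally show ?thesis using True by simp
  next
    case False
    then show ?thesis using off_diagonal[OF False] by (simp add: fire_delta_def)
  qed
qed

lemma (in banana_graph) Prin_eq_range_firing_div: "Prin g n = range (firing_div g n)"
proof -
  have "(\<lambda>u. \<Sum>w\<in>bverts g n. c w * fire_delta g n w u) = firing_div g n c" for c
  proof
    fix u
    have "(\<Sum>w\<in>bverts g n. c w * fire_delta g n w u) =
      (\<Sum>e\<in>bedges g n. (\<Sum>w\<in>bverts g n. c w * (indic w (edge_tgt n e) - indic w (edge_src n e))) *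
            (indic (edge_src n e) u - indic (edge_tgt n e) u))"
      by (simp add: fire_delta_eq_firing_div firing_div_def sum_distrib_left sum_distrib_right mult.assoc)
        (rule sum.swap)
    also have "\<dots> = firing_div g n c u"
      by (simp add: firing_div_def right_diff_distrib sum_subtractf sum_mult_indic
          edge_src_in_bverts edge_tgt_in_bverts)
    finally show "(\<Sum>w\<in>bverts g n. c w * fire_delta g n w u) = firing_div g n c u" .
  qed
  then show ?thesis by (auto simp: Prin_def)
qed

lemma firing_div_add: "firing_div g n (\<lambda>w. c w + d w) = (\<lambda>u. firing_div g n c u + firing_div g n d u)"
  unfolding firing_div_def sum.distrib[symmetric]
  by (intro ext sum.cong) (simp_all add: left_diff_distrib distrib_right)

lemma firing_div_smult: "firing_div g n (\<lambda>w. k * c w) = (\<lambda>u. k * firing_div g n c u)"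
  by (auto simp: firing_div_def algebra_simps sum_distrib_left)

lemma range_firing_div_add:
  "x \<in> range (firing_div g n) \<Longrightarrow> y \<in> range (firing_div g n) \<Longrightarrow>
    (\<lambda>u. x u + y u) \<in> range (firing_div g n)"
  by (auto simp: firing_div_add[symmetric])

lemma range_firing_div_smult:
  "x \<in> range (firing_div g n) \<Longrightarrow> (\<lambda>u. k * x u) \<in> range (firing_div g n)"
  by (auto simp: firing_div_smult[symmetric])

lemma range_firing_div_diff:
  "x \<in> range (firing_div g n) \<Longrightarrow> y \<in> range (firing_div g n) \<Longrightarrow>
    (\<lambda>u. x u - y u) \<in> range (firing_div g n)"
  using range_firing_div_add[OF _ range_firing_div_smult, of x g n y "-1"] by simp

lemma zero_in_range_firing_div: "(\<lambda>u. 0) \<in> range (firing_div g n)"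
proof (rule range_eqI)
  show "(\<lambda>u. 0) = firing_div g n (\<lambda>w. 0)" by (simp add: firing_div_def)
qed

lemma range_firing_div_sum:
  "finite S \<Longrightarrow> (\<And>s. s \<in> S \<Longrightarrow> f s \<in> range (firing_div g n)) \<Longrightarrow>
    (\<lambda>u. \<Sum>s\<in>S. f s u) \<in> range (firing_div g n)"
  by (induction S rule: finite_induct)
    (simp_all add: zero_in_range_firing_div range_firing_div_add)

lemma (in banana_graph) firing_div_at_origin:
  "firing_div g n c (0, 0) = (\<Sum>\<beta>\<le>g. c (bvert n \<beta> 1) - c (0, 0))"
proof -
  have "firing_div g n c (0, 0) =
      (\<Sum>e\<in>bedges g n. if snd e = 0 then c (edge_tgt n e) - c (edge_src n e) else 0)"
    unfolding firing_div_def
    by (rule sum.cong) (simp_all add: indic_edge_src_origin indic_edge_tgt_origin)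
  also have "\<dots> = (\<Sum>\<beta>\<le>g. c (bvert n \<beta> 1) - c (0, 0))"
    by (simp add: sum_bedges_initial edge_src_def edge_tgt_def bvert_def[of n _ 0])
  finally show ?thesis .
qed

lemma (in banana_graph) firing_div_at_interior:
  assumes \<alpha>: "\<alpha> \<le> g" and j: "0 < j" "j < n \<alpha>"
  shows "firing_div g n c (\<alpha>, j) =
    c (bvert n \<alpha> (Suc j)) - c (bvert n \<alpha> j) - (c (bvert n \<alpha> j) - c (bvert n \<alpha> (j - 1)))"
proof -
  let ?Y = "\<lambda>e. c (edge_tgt n e) - c (edge_src n e)"
  have "firing_div g n c (\<alpha>, j) =
      (\<Sum>e\<in>bedges g n. (if e = (\<alpha>, j) then ?Y e else 0) - (if e = (\<alpha>, j - 1) then ?Y e else 0))"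
    unfolding firing_div_def using j
    by (intro sum.cong) (simp_all add: indic_edge_src_interior indic_edge_tgt_interior)
  also have "\<dots> = ?Y (\<alpha>, j) - ?Y (\<alpha>, j - 1)"
  proof -
    have "(\<alpha>, j) \<in> bedges g n" "(\<alpha>, j - 1) \<in> bedges g n"
      using \<alpha> j by (auto simp: bedges_def)
    then show ?thesis by (simp add: sum_subtractf)
  qed
  finally show ?thesis
    using j by (simp add: edge_src_def edge_tgt_def)
qed

text \<open>Firing the interior vertices \<open>v\<^sub>\<alpha>\<^sub>,\<^sub>1, \<dots>, v\<^sub>\<alpha>\<^sub>,\<^sub>i\<close> once each moves one chip across
  the edges \<open>(\<alpha>, 0)\<close> and \<open>(\<alpha>, i)\<close> only.\<close>

lemma (in banana_graph) firing_path_segment: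
  assumes \<alpha>: "\<alpha> \<le> g" and i: "1 \<le> i" "i < n \<alpha>"
  shows "firing_div g n (\<lambda>p. if fst p = \<alpha> \<and> 1 \<le> snd p \<and> snd p \<le> i then 1 else 0) =
    (\<lambda>x. indic (bvert n \<alpha> (Suc i)) x - indic (bvert n \<alpha> i) x - (indic (bvert n \<alpha> 1) x - indic (0, 0) x))"
proof
  fix x
  define c where "c = (\<lambda>p::nat \<times> nat. if fst p = \<alpha> \<and> 1 \<le> snd p \<and> snd p \<le> i then 1 else (0::int))"
  have c_bvert: "j \<le> n \<beta> \<Longrightarrow> c (bvert n \<beta> j) = (if \<beta> = \<alpha> \<and> 1 \<le> j \<and> j \<le> i then 1 else 0)" for \<beta> j
    using i by (auto simp: c_def bvert_def)
  have c_edge: "c (edge_tgt n e) - c (edge_src n e) =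
      (if e = (\<alpha>, 0) then 1 else 0) - (if e = (\<alpha>, i) then 1 else 0)" if "e \<in> bedges g n" for e
    using that i c_bvert[of "Suc (snd e)" "fst e"] c_bvert[of "snd e" "fst e"]
    by (cases e) (auto simp: bedges_def edge_src_def edge_tgt_def)
  let ?X = "\<lambda>e. indic (edge_src n e) x - indic (edge_tgt n e) x"
  have "firing_div g n c x =
      (\<Sum>e\<in>bedges g n. (if e = (\<alpha>, 0) then ?X e else 0) - (if e = (\<alpha>, i) then ?X e else 0))"
    unfolding firing_div_def by (rule sum.cong) (simp_all add: c_edge left_diff_distrib)
  also have "\<dots> = ?X (\<alpha>, 0) - ?X (\<alpha>, i)"
  proof -
    have "(\<alpha>, 0) \<in> bedges g n" "(\<alpha>, i) \<in> bedges g n"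
      using \<alpha> i by (auto simp: bedges_def)
    then show ?thesis by (simp add: sum_subtractf)
  qed
  also have "\<dots> = indic (bvert n \<alpha> (Suc i)) x - indic (bvert n \<alpha> i) x - (indic (bvert n \<alpha> 1) x - indic (0, 0) x)"
    by (simp add: edge_src_def edge_tgt_def bvert_def[of n \<alpha> 0])
  finally show "firing_div g n (\<lambda>p. if fst p = \<alpha> \<and> 1 \<le> snd p \<and> snd p \<le> i then 1 else 0) x = \<dots>"
    by (simp add: c_def)
qed

lemma (in banana_graph) path_vertex_equiv:
  assumes \<alpha>: "\<alpha> \<le> g"
  shows "i \<le> n \<alpha> \<Longrightarrow> (\<lambda>x. indic (bvert n \<alpha> i) x - indic (0, 0) x
      - int i * (indic (bvert n \<alpha> 1) x - indic (0, 0) x)) \<in> range (firing_div g n)"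
proof (induction i)
  case 0
  then show ?case using zero_in_range_firing_div by (simp add: bvert_def)
next
  case (Suc i)
  show ?case
  proof (cases "i = 0")
    case True
    then show ?thesis using zero_in_range_firing_div by simp
  next
    case False
    then have "(\<lambda>x. indic (bvert n \<alpha> (Suc i)) x - indic (bvert n \<alpha> i) x
        - (indic (bvert n \<alpha> 1) x - indic (0, 0) x)) \<in> range (firing_div g n)"
      using Suc.prems by (subst firing_path_segment[OF \<alpha>, symmetric]) simp_all
    from range_firing_div_add[OF Suc.IH[OF Suc_leD[OF Suc.prems]] this]
    show ?thesis by (simp add: algebra_simps)
  qed
qed

lemma Div0_carrier:
  "D \<in> carrier (Div0 g n) \<longleftrightarrow> (\<forall>u. u \<notin> bverts g n \<longrightarrow> D u = 0) \<and> (\<Sum>u\<in>bverts g n. D u) = 0"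
  by (simp add: Div0_def)

lemma Div0_mult [simp]: "D \<otimes>\<^bsub>Div0 g n\<^esub> E = (\<lambda>u. D u + E u)"
  by (simp add: Div0_def)

lemma Div0_one [simp]: "\<one>\<^bsub>Div0 g n\<^esub> = (\<lambda>u. 0)"
  by (simp add: Div0_def)

lemma Zg_carrier: "a \<in> carrier (Zg g) \<longleftrightarrow> (\<forall>i. g < i \<longrightarrow> a i = 0)"
  by (simp add: Zg_def)

lemma Zg_mult [simp]: "a \<otimes>\<^bsub>Zg g\<^esub> b = (\<lambda>i. a i + b i)"
  by (simp add: Zg_def)

lemma Zg_one [simp]: "\<one>\<^bsub>Zg g\<^esub> = (\<lambda>i. 0)"
  by (simp add: Zg_def)

lemma Div0_comm_group: "comm_group (Div0 g n)"
proof (rule comm_groupI)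
  fix x assume "x \<in> carrier (Div0 g n)"
  then show "\<exists>y\<in>carrier (Div0 g n). y \<otimes>\<^bsub>Div0 g n\<^esub> x = \<one>\<^bsub>Div0 g n\<^esub>"
    by (intro bexI[of _ "\<lambda>u. - x u"]) (auto simp: Div0_carrier sum_negf)
qed (auto simp: Div0_carrier sum.distrib)

lemma Zg_comm_group: "comm_group (Zg g)"
proof (rule comm_groupI)
  fix x assume "x \<in> carrier (Zg g)"
  then show "\<exists>y\<in>carrier (Zg g). y \<otimes>\<^bsub>Zg g\<^esub> x = \<one>\<^bsub>Zg g\<^esub>"
    by (intro bexI[of _ "\<lambda>u. - x u"]) (auto simp: Zg_carrier)
qed (auto simp: Zg_carrier)

interpretation Div0: comm_group "Div0 g n" by (rule Div0_comm_group)
interpretation Zg: comm_group "Zg g" by (rule Zg_comm_group)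

lemma Div0_inv: "x \<in> carrier (Div0 g n) \<Longrightarrow> inv\<^bsub>Div0 g n\<^esub> x = (\<lambda>u. - x u)"
  by (rule Div0.inv_equality) (auto simp: Div0_carrier sum_negf)

lemma Zg_inv: "x \<in> carrier (Zg g) \<Longrightarrow> inv\<^bsub>Zg g\<^esub> x = (\<lambda>u. - x u)"
  by (rule Zg.inv_equality) (auto simp: Zg_carrier)

lemma firing_div_in_Div0: "firing_div g n c \<in> carrier (Div0 g n)"
proof -
  have "firing_div g n c u = 0" if "u \<notin> bverts g n" for u
    unfolding firing_div_def using that
    by (intro sum.neutral) (auto simp: indic_def dest: edge_src_in_bverts edge_tgt_in_bverts)
  then show ?thesis by (simp add: Div0_carrier sum_firing_div)
qed

context banana_graph
begin

lemma Prin_subgroup: "subgroup (Prin g n) (Div0 g n)"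
  unfolding Prin_eq_range_firing_div
proof (rule Div0.subgroupI)
  show "range (firing_div g n) \<subseteq> carrier (Div0 g n)" using firing_div_in_Div0 by blast
  fix a b assume a: "a \<in> range (firing_div g n)" and b: "b \<in> range (firing_div g n)"
  show "inv\<^bsub>Div0 g n\<^esub> a \<in> range (firing_div g n)"
    using a firing_div_in_Div0 range_firing_div_smult[of a g n "-1"] by (auto simp: Div0_inv)
  show "a \<otimes>\<^bsub>Div0 g n\<^esub> b \<in> range (firing_div g n)"
    using a b by (simp add: range_firing_div_add)
qed simp

lemma Prin_normal: "Prin g n \<lhd> Div0 g n"
  by (rule Div0.subgroup_imp_normal[OF Prin_subgroup])

lemma Jac_group: "group (Jac g n)"
  unfolding Jac_def by (rule normal.factorgroup_is_group[OF Prin_normal])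

lemma Prin_rcos_eq:
  assumes x: "x \<in> carrier (Div0 g n)" and diff: "(\<lambda>u. y u - x u) \<in> range (firing_div g n)"
  shows "Prin g n #>\<^bsub>Div0 g n\<^esub> x = Prin g n #>\<^bsub>Div0 g n\<^esub> y"
proof -
  have "(\<lambda>u. y u - x u) \<otimes>\<^bsub>Div0 g n\<^esub> x \<in> Prin g n #>\<^bsub>Div0 g n\<^esub> x"
    using diff x by (intro Div0.rcosI) (auto simp: Prin_eq_range_firing_div firing_div_in_Div0)
  then have "y \<in> Prin g n #>\<^bsub>Div0 g n\<^esub> x" by simp
  then show ?thesis by (rule Div0.repr_independence[OF _ x Prin_subgroup])
qed

end

section \<open>The map \<open>\<int>\<^sup>g\<^sup>+\<^sup>1 \<rightarrow> Jac\<close>\<close>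

definition spoke_div :: "nat \<Rightarrow> (nat \<Rightarrow> nat) \<Rightarrow> (nat \<Rightarrow> int) \<Rightarrow> nat \<times> nat \<Rightarrow> int" where
  "spoke_div g n a = (\<lambda>u. \<Sum>\<alpha>\<le>g. a \<alpha> * (indic (bvert n \<alpha> 1) u - indic (0, 0) u))"

definition spoke_class :: "nat \<Rightarrow> (nat \<Rightarrow> nat) \<Rightarrow> (nat \<Rightarrow> int) \<Rightarrow> (nat \<times> nat \<Rightarrow> int) set" where
  "spoke_class g n a = Prin g n #>\<^bsub>Div0 g n\<^esub> spoke_div g n a"

lemma spoke_div_add: "spoke_div g n (\<lambda>i. a i + b i) = (\<lambda>u. spoke_div g n a u + spoke_div g n b u)"
  by (auto simp: spoke_div_def distrib_right sum.distrib)

lemma spoke_div_diff: "spoke_div g n (\<lambda>i. a i - b i) = (\<lambda>u. spoke_div g n a u - spoke_div g n b u)"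
  by (auto simp: spoke_div_def left_diff_distrib sum_subtractf)

lemma spoke_div_scaled_indic:
  assumes "\<beta> \<le> g"
  shows "spoke_div g n (\<lambda>i. k * indic \<beta> i) = (\<lambda>u. k * (indic (bvert n \<beta> 1) u - indic (0, 0) u))"
proof
  fix u
  have "spoke_div g n (\<lambda>i. k * indic \<beta> i) u =
      (\<Sum>\<alpha>\<le>g. if \<alpha> = \<beta> then k * (indic (bvert n \<beta> 1) u - indic (0, 0) u) else 0)"
    unfolding spoke_div_def by (rule sum.cong) (auto simp: indic_def[of \<beta>])
  then show "spoke_div g n (\<lambda>i. k * indic \<beta> i) u = k * (indic (bvert n \<beta> 1) u - indic (0, 0) u)"
    using assms by simp
qed

context banana_graph
begin

lemma spoke_div_in_Div0: "spoke_div g n a \<in> carrier (Div0 g n)"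
proof -
  have "(\<Sum>u\<in>bverts g n. spoke_div g n a u) =
      (\<Sum>\<alpha>\<le>g. a \<alpha> * (\<Sum>u\<in>bverts g n. indic (bvert n \<alpha> 1) u - indic (0, 0) u))"
    unfolding spoke_div_def by (subst sum.swap) (simp add: sum_distrib_left)
  also have "\<dots> = 0"
    using paths_nonempty
    by (intro sum.neutral) (simp add: sum_subtractf sum_indic bvert_in_bverts origin_in_bverts)
  finally have "(\<Sum>u\<in>bverts g n. spoke_div g n a u) = 0" .
  moreover have "spoke_div g n a u = 0" if "u \<notin> bverts g n" for u
    unfolding spoke_div_def using that paths_nonempty origin_in_bverts[of g n]
    by (intro sum.neutral) (auto simp: indic_def dest: bvert_in_bverts)
  ultimately show ?thesis by (simp add: Div0_carrier)
qed

lemma spoke_class_hom: "spoke_class g n \<in> hom (Zg g) (Jac g n)"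
proof -
  have coset_hom: "(\<lambda>D. Prin g n #>\<^bsub>Div0 g n\<^esub> D) \<in> hom (Div0 g n) (Jac g n)"
    unfolding Jac_def by (rule normal.r_coset_hom_Mod[OF Prin_normal])
  show ?thesis
  proof (rule homI)
    fix x assume "x \<in> carrier (Zg g)"
    show "spoke_class g n x \<in> carrier (Jac g n)"
      unfolding spoke_class_def by (rule hom_in_carrier[OF coset_hom spoke_div_in_Div0])
  next
    fix x y assume "x \<in> carrier (Zg g)" "y \<in> carrier (Zg g)"
    show "spoke_class g n (x \<otimes>\<^bsub>Zg g\<^esub> y) = spoke_class g n x \<otimes>\<^bsub>Jac g n\<^esub> spoke_class g n y"
      using hom_mult[OF coset_hom spoke_div_in_Div0 spoke_div_in_Div0, of x y]
      by (simp add: spoke_class_def spoke_div_add)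
  qed
qed

lemma spoke_class_group_hom: "group_hom (Zg g) (Jac g n) (spoke_class g n)"
  using spoke_class_hom Jac_group Zg.is_group
  by (simp add: group_hom_def group_hom_axioms_def)

lemma spoke_div_at_origin: "spoke_div g n a (0, 0) = - (\<Sum>\<beta>\<le>g. a \<beta>)"
proof -
  have "spoke_div g n a (0, 0) = (\<Sum>\<beta>\<le>g. - a \<beta>)"
    unfolding spoke_div_def using paths_nonempty by (intro sum.cong) (auto simp: indic_def bvert_def)
  then show ?thesis by (simp add: sum_negf)
qed

lemma spoke_div_at_interior:
  assumes "\<alpha> \<le> g" "0 < j" "j < n \<alpha>"
  shows "spoke_div g n a (\<alpha>, j) = (if j = 1 then a \<alpha> else 0)"
proof -
  have "spoke_div g n a (\<alpha>, j) = (\<Sum>\<beta>\<le>g. if \<beta> = \<alpha> then (if j = 1 then a \<alpha> else 0) else 0)"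
    unfolding spoke_div_def using assms by (intro sum.cong) (auto simp: indic_def bvert_def)
  then show ?thesis using assms by simp
qed

end

section \<open>Surjectivity\<close>

lemma Div0_expansion:
  assumes "D \<in> carrier (Div0 g n)"
  shows "D x = (\<Sum>u\<in>bverts g n. D u * (indic u x - indic (0, 0) x))"
proof -
  have "(\<Sum>u\<in>bverts g n. D u * indic u x) = (\<Sum>u\<in>bverts g n. if u = x then D x else 0)"
    by (rule sum.cong) (auto simp: indic_def)
  also have "\<dots> = D x"
  proof -
    have "D x = 0" if "x \<notin> bverts g n"
      using assms that unfolding Div0_carrier by blast
    then show ?thesis by simp
  qed
  finally have "(\<Sum>u\<in>bverts g n. D u * indic u x) = D x" .
  moreover have "(\<Sum>u\<in>bverts g n. D u * indic (0, 0) x) = 0"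
    using assms by (simp add: Div0_carrier sum_distrib_right[symmetric])
  ultimately show ?thesis
    by (simp add: right_diff_distrib sum_subtractf)
qed

lemma (in banana_graph) Div0_equiv_spoke_div:
  assumes D: "D \<in> carrier (Div0 g n)"
  obtains a where "a \<in> carrier (Zg g)" "(\<lambda>u. D u - spoke_div g n a u) \<in> range (firing_div g n)"
proof
  let ?V = "bverts g n"
  let ?I = "\<lambda>\<beta> x. indic (bvert n \<beta> 1) x - indic (0, 0) x"
  define a where "a \<beta> = (if \<beta> \<le> g then (\<Sum>u\<in>?V. D u * (if fst u = \<beta> then int (snd u) else 0)) else 0)" for \<beta>
  show "a \<in> carrier (Zg g)" by (simp add: a_def Zg_carrier)
  have spoke_div_a: "spoke_div g n a x = (\<Sum>u\<in>?V. D u * (int (snd u) * ?I (fst u) x))" for x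
  proof -
    have "spoke_div g n a x = (\<Sum>\<beta>\<le>g. \<Sum>u\<in>?V. if \<beta> = fst u then D u * (int (snd u) * ?I \<beta> x) else 0)"
      unfolding spoke_div_def a_def by (auto simp: sum_distrib_right intro!: sum.cong)
    also have "\<dots> = (\<Sum>u\<in>?V. D u * (int (snd u) * ?I (fst u) x))"
      by (subst sum.swap) (auto dest: bverts_canonical intro!: sum.cong)
    finally show ?thesis .
  qed
  have "(\<lambda>x. D x - spoke_div g n a x) =
      (\<lambda>x. \<Sum>u\<in>?V. D u * (indic u x - indic (0, 0) x - int (snd u) * ?I (fst u) x))"
  proof
    fix x
    show "D x - spoke_div g n a x =
        (\<Sum>u\<in>?V. D u * (indic u x - indic (0, 0) x - int (snd u) * ?I (fst u) x))"
      by (subst Div0_expansion[OF D, of x]) (simp add: spoke_div_a right_diff_distrib sum_subtractf)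
  qed
  also have "\<dots> \<in> range (firing_div g n)"
  proof (rule range_firing_div_sum)
    fix u assume u: "u \<in> ?V"
    then have "(\<lambda>x. indic (bvert n (fst u) (snd u)) x - indic (0, 0) x - int (snd u) * ?I (fst u) x)
        \<in> range (firing_div g n)"
      using bverts_canonical[OF u] by (intro path_vertex_equiv) simp_all
    then show "(\<lambda>x. D u * (indic u x - indic (0, 0) x - int (snd u) * ?I (fst u) x)) \<in> range (firing_div g n)"
      using bverts_canonical[OF u] range_firing_div_smult by fastforce
  qed simp
  finally show "(\<lambda>x. D x - spoke_div g n a x) \<in> range (firing_div g n)" .
qed

lemma (in banana_graph) spoke_class_onto: "spoke_class g n ` carrier (Zg g) = carrier (Jac g n)"
proof
  show "spoke_class g n ` carrier (Zg g) \<subseteq> carrier (Jac g n)"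
    using hom_in_carrier[OF spoke_class_hom] by blast
  show "carrier (Jac g n) \<subseteq> spoke_class g n ` carrier (Zg g)"
  proof
    fix C assume "C \<in> carrier (Jac g n)"
    then obtain D where D: "D \<in> carrier (Div0 g n)" and C: "C = Prin g n #>\<^bsub>Div0 g n\<^esub> D"
      by (auto simp: Jac_def FactGroup_def RCOSETS_def)
    obtain a where a: "a \<in> carrier (Zg g)"
      and equiv: "(\<lambda>u. D u - spoke_div g n a u) \<in> range (firing_div g n)"
      using Div0_equiv_spoke_div[OF D] by blast
    have "spoke_class g n a = C"
      unfolding spoke_class_def C by (rule Prin_rcos_eq[OF spoke_div_in_Div0 equiv])
    then show "C \<in> spoke_class g n ` carrier (Zg g)" using a by blast
  qed
qed

section \<open>The kernel\<close>

lemma Kgen_subset_carrier: "Kgen g n \<subseteq> carrier (Zg g)"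
  by (auto simp: Kgen_def Zg_carrier indic_def)

lemma Ksub_subgroup: "subgroup (Ksub g n) (Zg g)"
  unfolding Ksub_def by (rule Zg.generate_is_subgroup[OF Kgen_subset_carrier])

lemma Kgen_subset_Ksub: "Kgen g n \<subseteq> Ksub g n"
  unfolding Ksub_def by (auto intro: generate.incl)

lemma Zg_subgroup_add: "subgroup H (Zg g) \<Longrightarrow> x \<in> H \<Longrightarrow> y \<in> H \<Longrightarrow> (\<lambda>i. x i + y i) \<in> H"
  using subgroup.m_closed[of H "Zg g" x y] by simp

lemma Zg_subgroup_int_mult:
  assumes H: "subgroup H (Zg g)" and x: "x \<in> H"
  shows "(\<lambda>i. k * x i) \<in> H"
proof -
  have nat_mult: "(\<lambda>i. int m * x i) \<in> H" for m
  proof (induction m)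
    case 0
    then show ?case using subgroup.one_closed[OF H] by simp
  next
    case (Suc m)
    then show ?case using Zg_subgroup_add[OF H x Suc] by (simp add: distrib_right)
  qed
  show ?thesis
  proof (cases "0 \<le> k")
    case True
    then show ?thesis using nat_mult[of "nat k"] by simp
  next
    case False
    let ?y = "\<lambda>i. int (nat (- k)) * x i"
    have "inv\<^bsub>Zg g\<^esub> ?y \<in> H"
      by (rule subgroup.m_inv_closed[OF H nat_mult])
    moreover have "inv\<^bsub>Zg g\<^esub> ?y = (\<lambda>i. k * x i)"
      using False Zg_inv[OF subgroup.mem_carrier[OF H nat_mult[of "nat (- k)"]]] by simp
    ultimately show ?thesis by simp
  qed
qed

lemma Zg_subgroup_sum:
  assumes H: "subgroup H (Zg g)"
  shows "finite S \<Longrightarrow> (\<And>s. s \<in> S \<Longrightarrow> f s \<in> H) \<Longrightarrow> (\<lambda>i. \<Sum>s\<in>S. f s i) \<in> H"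
proof (induction S rule: finite_induct)
  case empty
  then show ?case using subgroup.one_closed[OF H] by simp
next
  case (insert x F)
  then show ?case using Zg_subgroup_add[OF H, of "f x" "\<lambda>i. \<Sum>s\<in>F. f s i"] by simp
qed

text \<open>Explicitly, \<open>a = -T (1,\<dots>,1) - \<Sum>\<^sub>\<beta>\<^sub>\<ge>\<^sub>1 d\<^sub>\<beta> (n\<^sub>0 e\<^sub>0 - n\<^sub>\<beta> e\<^sub>\<beta>)\<close>; the coefficients of
  \<open>e\<^sub>0\<close> agree because \<open>-\<Sum>\<^sub>\<beta>\<^sub>\<ge>\<^sub>1 d\<^sub>\<beta> = d\<^sub>0\<close>.\<close>

lemma affine_vector_in_Ksub:
  assumes a: "a \<in> carrier (Zg g)"
    and affine: "\<And>\<beta>. \<beta> \<le> g \<Longrightarrow> a \<beta> = int (n \<beta>) * d \<beta> - T"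
    and slopes: "(\<Sum>\<beta>\<le>g. d \<beta>) = 0"
  shows "a \<in> Ksub g n"
proof -
  define gen where "gen \<beta> = (\<lambda>i. int (n 0) * indic 0 i - int (n \<beta>) * indic \<beta> i)" for \<beta>
  have slopes': "(\<Sum>\<beta>\<in>{1..g}. d \<beta>) = - d 0"
    using slopes by (simp add: atMost_atLeast0 sum.atLeast_Suc_atMost)
  have a_eq: "a = (\<lambda>i. (- T) * (if i \<le> g then 1 else 0) + (\<Sum>\<beta>\<in>{1..g}. (- d \<beta>) * gen \<beta> i))"
  proof
    fix i
    consider "g < i" | "i = 0" | "0 < i" "i \<le> g" by linarith
    then show "a i = (- T) * (if i \<le> g then 1 else 0) + (\<Sum>\<beta>\<in>{1..g}. (- d \<beta>) * gen \<beta> i)"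
    proof cases
      case 1
      then show ?thesis
        using a by (auto simp: Zg_carrier gen_def indic_def intro!: sum.neutral)
    next
      case 2
      have "(\<Sum>\<beta>\<in>{1..g}. (- d \<beta>) * gen \<beta> i) = - (int (n 0) * (\<Sum>\<beta>\<in>{1..g}. d \<beta>))"
        using 2 by (auto simp: gen_def indic_def sum_distrib_left sum_negf[symmetric] intro!: sum.cong)
      then show ?thesis using 2 affine[of 0] slopes' by simp
    next
      case 3
      have "(\<Sum>\<beta>\<in>{1..g}. (- d \<beta>) * gen \<beta> i) = (\<Sum>\<beta>\<in>{1..g}. if \<beta> = i then int (n i) * d i else 0)"
        using 3 by (intro sum.cong) (auto simp: gen_def indic_def)
      then show ?thesis using 3 affine[of i] by simp
    qed
  qed
  have ones: "(\<lambda>i. if i \<le> g then 1 else 0) \<in> Ksub g n"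
    and gens: "\<And>\<beta>. \<beta> \<in> {1..g} \<Longrightarrow> gen \<beta> \<in> Ksub g n"
    using Kgen_subset_Ksub by (auto simp: Kgen_def gen_def)
  have "(\<lambda>i. (- T) * (if i \<le> g then 1 else 0)) \<in> Ksub g n"
    by (rule Zg_subgroup_int_mult[OF Ksub_subgroup ones])
  moreover have "(\<lambda>i. \<Sum>\<beta>\<in>{1..g}. (- d \<beta>) * gen \<beta> i) \<in> Ksub g n"
    by (rule Zg_subgroup_sum[OF Ksub_subgroup finite_atLeastAtMost])
      (rule Zg_subgroup_int_mult[OF Ksub_subgroup gens])
  ultimately show ?thesis
    unfolding a_eq by (rule Zg_subgroup_add[OF Ksub_subgroup])
qed

lemma second_difference_increment:
  fixes f :: "nat \<Rightarrow> int"
  assumes N: "1 \<le> N"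
    and second_diff: "\<And>j. 0 < j \<Longrightarrow> j < N \<Longrightarrow> f (Suc j) - f j - (f j - f (j - 1)) = (if j = 1 then A else 0)"
  shows "f N - f 0 = int N * (f 1 - f 0 + A) - A"
proof -
  define d where "d = f 1 - f 0 + A"
  have step: "f (Suc k) - f k = d" if "1 \<le> k" "k < N" for k
    using that
  proof (induction k)
    case (Suc k)
    then show ?case using second_diff[of "Suc k"] second_diff[of 1] by (cases "k = 0") (simp_all add: d_def)
  qed simp
  have "f j = f 1 + int (j - 1) * d" if "1 \<le> j" "j \<le> N" for j
    using that
  proof (induction j)
    case (Suc j)
    then show ?case using step[of j] by (cases "j = 0") (simp_all add: algebra_simps of_nat_diff)
  qed simp
  from this[of N] N show ?thesis by (simp add: d_def algebra_simps of_nat_diff)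
qed

context banana_graph
begin

lemma spoke_div_principal_affine:
  assumes principal: "spoke_div g n a = firing_div g n c"
  obtains d T where "\<And>\<beta>. \<beta> \<le> g \<Longrightarrow> a \<beta> = int (n \<beta>) * d \<beta> - T" "(\<Sum>\<beta>\<le>g. d \<beta>) = 0"
proof
  define T where "T = c (0, n 0) - c (0, 0)"
  define d where "d \<beta> = c (bvert n \<beta> 1) - c (0, 0) + a \<beta>" for \<beta>
  fix \<beta> assume \<beta>: "\<beta> \<le> g"
  define f where "f j = c (bvert n \<beta> j)" for j
  have "f (n \<beta>) - f 0 = int (n \<beta>) * (f 1 - f 0 + a \<beta>) - a \<beta>"
  proof (rule second_difference_increment)
    show "1 \<le> n \<beta>" using paths_nonempty \<beta> by simp
    fix j assume j: "0 < j" "j < n \<beta>"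
    have "firing_div g n c (\<beta>, j) = spoke_div g n a (\<beta>, j)" using principal by simp
    then show "f (Suc j) - f j - (f j - f (j - 1)) = (if j = 1 then a \<beta> else 0)"
      unfolding f_def firing_div_at_interior[OF \<beta> j] spoke_div_at_interior[OF \<beta> j] .
  qed
  then show "a \<beta> = int (n \<beta>) * d \<beta> - T"
    using bvert_end[OF \<beta>] by (simp add: f_def T_def d_def bvert_def[of n \<beta> 0])
next
  have "firing_div g n c (0, 0) = spoke_div g n a (0, 0)" using principal by simp
  then show "(\<Sum>\<beta>\<le>g. c (bvert n \<beta> 1) - c (0, 0) + a \<beta>) = 0"
    unfolding firing_div_at_origin spoke_div_at_origin by (simp add: sum.distrib)
qed

lemma spoke_div_all_ones: "spoke_div g n (\<lambda>i. if i \<le> g then 1 else 0) = firing_div g n (indic (0, 0))"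
proof
  fix u
  have "firing_div g n (indic (0, 0)) u =
      (\<Sum>e\<in>bedges g n. if snd e = 0 then indic (edge_tgt n e) u - indic (edge_src n e) u else 0)"
    unfolding firing_div_def
    by (rule sum.cong) (simp_all add: indic_commute[of "(0, 0)"] indic_edge_src_origin indic_edge_tgt_origin)
  also have "\<dots> = (\<Sum>\<beta>\<le>g. indic (bvert n \<beta> 1) u - indic (0, 0) u)"
    by (simp add: sum_bedges_initial edge_src_def edge_tgt_def bvert_def[of n _ 0])
  finally show "spoke_div g n (\<lambda>i. if i \<le> g then 1 else 0) u = firing_div g n (indic (0, 0)) u"
    by (simp add: spoke_div_def)
qed

lemma spoke_div_path_difference:
  assumes \<alpha>: "\<alpha> \<le> g"
  shows "spoke_div g n (\<lambda>i. int (n 0) * indic 0 i - int (n \<alpha>) * indic \<alpha> i) \<in> range (firing_div g n)"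
proof -
  let ?I = "\<lambda>\<beta> x. indic (bvert n \<beta> 1) x - indic (0, 0) x"
  have "spoke_div g n (\<lambda>i. int (n 0) * indic 0 i - int (n \<alpha>) * indic \<alpha> i) =
     (\<lambda>x. (indic (bvert n \<alpha> (n \<alpha>)) x - indic (0, 0) x - int (n \<alpha>) * ?I \<alpha> x) -
          (indic (bvert n 0 (n 0)) x - indic (0, 0) x - int (n 0) * ?I 0 x))"
    using \<alpha> by (simp add: spoke_div_diff spoke_div_scaled_indic bvert_end)
  also have "\<dots> \<in> range (firing_div g n)"
    by (rule range_firing_div_diff[OF path_vertex_equiv[OF \<alpha> order.refl] path_vertex_equiv[OF le0 order.refl]])
  finally show ?thesis .
qed

lemma kernel_spoke_class_eq:
  "kernel (Zg g) (Jac g n) (spoke_class g n) = {a \<in> carrier (Zg g). spoke_div g n a \<in> Prin g n}"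
proof -
  have "spoke_class g n a = Prin g n \<longleftrightarrow> spoke_div g n a \<in> Prin g n" for a
    unfolding spoke_class_def
    using Div0.rcos_self[OF spoke_div_in_Div0 Prin_subgroup]
      subgroup.rcos_const[OF Prin_subgroup Div0.is_group]
    by metis
  moreover have "\<one>\<^bsub>Jac g n\<^esub> = Prin g n" by (simp add: Jac_def FactGroup_def)
  ultimately show ?thesis unfolding kernel_def by simp
qed

lemma kernel_spoke_class: "kernel (Zg g) (Jac g n) (spoke_class g n) = Ksub g n"
proof
  show "kernel (Zg g) (Jac g n) (spoke_class g n) \<subseteq> Ksub g n"
  proof
    fix a assume "a \<in> kernel (Zg g) (Jac g n) (spoke_class g n)"
    then obtain c where a: "a \<in> carrier (Zg g)" and "spoke_div g n a = firing_div g n c"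
      unfolding kernel_spoke_class_eq Prin_eq_range_firing_div by auto
    from this(2) show "a \<in> Ksub g n"
      by (rule spoke_div_principal_affine) (rule affine_vector_in_Ksub[OF a])
  qed
  show "Ksub g n \<subseteq> kernel (Zg g) (Jac g n) (spoke_class g n)"
    unfolding Ksub_def
  proof (rule Zg.generate_subgroup_incl[OF _ group_hom.subgroup_kernel[OF spoke_class_group_hom]])
    show "Kgen g n \<subseteq> kernel (Zg g) (Jac g n) (spoke_class g n)"
      unfolding kernel_spoke_class_eq Prin_eq_range_firing_div
      using Kgen_subset_carrier spoke_div_all_ones spoke_div_path_difference
      by (auto simp: Kgen_def)
  qed
qed

lemma path_vertices_equiv_spoke_div:
  assumes bounds: "\<forall>\<alpha>\<le>g. 0 \<le> a \<alpha> \<and> a \<alpha> \<le> int (n \<alpha>)"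
  shows "(\<lambda>u. (\<Sum>\<alpha>\<le>g. indic (bvert n \<alpha> (nat (a \<alpha>))) u - indic (0, 0) u) - spoke_div g n a u)
    \<in> range (firing_div g n)"
proof -
  let ?I = "\<lambda>\<beta> x. indic (bvert n \<beta> 1) x - indic (0, 0) x"
  have "(\<lambda>u. (\<Sum>\<alpha>\<le>g. indic (bvert n \<alpha> (nat (a \<alpha>))) u - indic (0, 0) u) - spoke_div g n a u) =
      (\<lambda>u. \<Sum>\<alpha>\<le>g. indic (bvert n \<alpha> (nat (a \<alpha>))) u - indic (0, 0) u - int (nat (a \<alpha>)) * ?I \<alpha> u)"
    unfolding spoke_div_def using bounds by (auto simp: sum_subtractf intro!: sum.cong)
  also have "\<dots> \<in> range (firing_div g n)"
    using bounds by (intro range_firing_div_sum path_vertex_equiv) auto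
  finally show ?thesis .
qed

end

lemma (in group_hom) the_elem_image_kernel_rcos:
  assumes "x \<in> carrier G"
  shows "the_elem (h ` (kernel G H h #> x)) = h x"
proof (rule the_elem_image_unique)
  show "kernel G H h #> x \<noteq> {}"
    using G.rcos_self[OF assms subgroup_kernel] by blast
  fix y assume "y \<in> kernel G H h #> x"
  then obtain k where k: "k \<in> kernel G H h" and y: "y = k \<otimes>\<^bsub>G\<^esub> x"
    by (auto simp: r_coset_def)
  then show "h y = h x"
    using assms by (simp add: kernel_def)
qed

theorem mainTheorem13:
  fixes g :: nat and n :: "nat \<Rightarrow> nat"
  assumes "\<forall>\<alpha>\<le>g. 1 \<le> n \<alpha>"
  shows "\<exists>h. h \<in> iso (Zg g Mod Ksub g n) (Jac g n) \<and>
    (\<forall>a \<in> carrier (Zg g).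
       h (Ksub g n #>\<^bsub>Zg g\<^esub> a) =
       Prin g n #>\<^bsub>Div0 g n\<^esub>
         (\<lambda>u. \<Sum>\<alpha>\<le>g. a \<alpha> * (indic (bvert n \<alpha> 1) u - indic (0, 0) u))) \<and>
    (\<forall>a \<in> carrier (Zg g). (\<forall>\<alpha>\<le>g. 0 \<le> a \<alpha> \<and> a \<alpha> \<le> int (n \<alpha>)) \<longrightarrow>
       h (Ksub g n #>\<^bsub>Zg g\<^esub> a) =
       Prin g n #>\<^bsub>Div0 g n\<^esub>
         (\<lambda>u. \<Sum>\<alpha>\<le>g. indic (bvert n \<alpha> (nat (a \<alpha>))) u - indic (0, 0) u))"
proof -
  interpret banana_graph g n by unfold_locales (rule assms)
  let ?h = "\<lambda>C. the_elem (spoke_class g n ` C)"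
  have iso: "?h \<in> iso (Zg g Mod Ksub g n) (Jac g n)"
    using group_hom.FactGroup_iso_set[OF spoke_class_group_hom spoke_class_onto]
    unfolding kernel_spoke_class .
  have coset: "?h (Ksub g n #>\<^bsub>Zg g\<^esub> a) = Prin g n #>\<^bsub>Div0 g n\<^esub> spoke_div g n a"
    if "a \<in> carrier (Zg g)" for a
    using group_hom.the_elem_image_kernel_rcos[OF spoke_class_group_hom that]
    unfolding kernel_spoke_class spoke_class_def .
  have standard: "?h (Ksub g n #>\<^bsub>Zg g\<^esub> a) = Prin g n #>\<^bsub>Div0 g n\<^esub>
      (\<lambda>u. \<Sum>\<alpha>\<le>g. indic (bvert n \<alpha> (nat (a \<alpha>))) u - indic (0, 0) u)"
    if "a \<in> carrier (Zg g)" "\<forall>\<alpha>\<le>g. 0 \<le> a \<alpha> \<and> a \<alpha> \<le> int (n \<alpha>)" for a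
    unfolding coset[OF that(1)] by (rule Prin_rcos_eq[OF spoke_div_in_Div0 path_vertices_equiv_spoke_div[OF that(2)]])
  show ?thesis
    using iso coset standard unfolding spoke_div_def by blast
qed

end
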